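(* Let $m \geq 1$ and let $d$ be a positive integer with $\gcd(d, 2^m-1)=1$. For $a \in \mathrm{GF}(2^m)$ define $$W_d(a) = \sum_{x \in \mathrm{GF}(2^m)} (-1)^{\mathrm{Tr}(x^d + a x)},$$ where $\mathrm{Tr}\colon \mathrm{GF}(2^m)\to\mathrm{GF}(2)$ is the absolute trace. Suppose that $W_d(a)$ takes precisely three distinct values $A$, $B$, $C$ for $a \in \mathrm{GF}(2^m)^*$. If $A$, $B$, $C$ are all nonzero, then $2^{m+1}$ divides $AB$.
   Context: $W_d$ is the Walsh transform of the power map $x\mapsto x^d$ on $\mathrm{GF}(2^m)$. *)

theory Defs
  imports Main
begin

text \<open>GF(2^m) is rendered as an arbitrary finite field type 'a with CARD('a) = 2^m
  (unique up to isomorphism). The absolute trace GF(2^m) -> GF(2) is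
  Tr(x) = sum_{i<m} x^(2^i), whose values lie in the prime subfield {0,1}.\<close>

definition abs_trace :: "nat \<Rightarrow> 'a::field \<Rightarrow> 'a" where
  "abs_trace m x = (\<Sum>i<m. x ^ (2 ^ i))"

definition walsh_power :: "nat \<Rightarrow> nat \<Rightarrow> 'a::{field,finite} \<Rightarrow> int" where
  "walsh_power m d a = (\<Sum>x\<in>(UNIV::'a set).
      if abs_trace m (x ^ d + a * x) = 0 then 1 else -1)"

end

theory Submission
  imports Defs "HOL-Computational_Algebra.Polynomial" "HOL-Number_Theory.Residues"
    "HOL-Library.Numeral_Type" "HOL-Library.Disjoint_Sets"
begin

text \<open>
  The Walsh values satisfy \<open>W(0) = 0\<close>, \<open>\<Sum>W(a) = 2^m\<close> and, by Parseval,
  \<open>\<Sum>W(a)^2 = 2^(2m)\<close>. The third moment is divisible by \<open>2^(2m+1)\<close>: summing the cubed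
  transforms of all scalings \<open>b x^d\<close> gives \<open>2^(2m)\<close> times the number of solutions of
  \<open>x + y + z = 0\<close>, \<open>x^d + y^d + z^d = 0\<close>, which is even; the scaling \<open>b = 0\<close> contributes
  \<open>2^(3m)\<close>, and every other one contributes the third moment itself, as \<open>b\<close> is a \<open>d\<close>-th power.
  On the \<open>2^m - 1\<close> nonzero points \<open>(W - A)(W - B)(W - C) = 0\<close>, so the moments yield
  \<open>2^(2m+1) | ABC(2^m - 1) - 2^m(AB + BC + CA) + 2^(2m)(A + B + C)\<close>. Parseval forces
  \<open>|A|, |B|, |C| < 2^m\<close>, so every term but the first has larger 2-adic valuation than \<open>ABC\<close>;
  hence \<open>v(ABC) \<ge> 2m + 1\<close>, and \<open>v(C) < m\<close> leaves \<open>v(AB) \<ge> m + 1\<close>.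
\<close>

lemma even_card_involution:
  assumes "finite X" and "\<And>x. x \<in> X \<Longrightarrow> h x \<in> X"
    and "\<And>x. x \<in> X \<Longrightarrow> h (h x) = x" and "\<And>x. x \<in> X \<Longrightarrow> h x \<noteq> x"
  shows "even (card X)"
proof -
  have "(\<Sum>x\<in>X. 1 :: 2) = 0"
    by (rule sum_involution_eq_0[where h = h]) (use assms in auto)
  then show ?thesis
    by (simp add: of_nat_eq_0_iff_char_dvd)
qed

lemma sum_power3_eq_sum_triples:
  fixes g :: "'a \<Rightarrow> 'b::comm_semiring_1"
  shows "(\<Sum>x\<in>A. g x) ^ 3 = (\<Sum>(x, y, z)\<in>A \<times> A \<times> A. g x * g y * g z)"
proof -
  have "(\<Sum>x\<in>A. g x) ^ 3 = (\<Sum>x\<in>A. \<Sum>y\<in>A. \<Sum>z\<in>A. g x * g y * g z)"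
    by (simp add: power3_eq_cube sum_distrib_left sum_distrib_right mult_ac)
  then show ?thesis
    by (simp add: sum.cartesian_product)
qed

section \<open>Finite fields\<close>

lemma field_power_card_minus_one:
  fixes x :: "'a::{field,finite}"
  assumes "x \<noteq> 0"
  shows "x ^ (CARD('a) - 1) = 1"
proof -
  let ?U = "UNIV - {0} :: 'a set"
  have "(\<Prod>y\<in>?U. x * y) = (\<Prod>y\<in>?U. y)"
    by (rule prod.reindex_bij_witness[of _ "\<lambda>y. y / x" "\<lambda>y. x * y"]) (use assms in auto)
  moreover have "(\<Prod>y\<in>?U. x * y) = x ^ card ?U * (\<Prod>y\<in>?U. y)"
    by (simp add: prod.distrib)
  moreover have "(\<Prod>y\<in>?U. y) \<noteq> 0"
    by simp
  moreover have "card ?U = CARD('a) - 1"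
    by (simp add: card_Diff_singleton)
  ultimately show ?thesis
    by simp
qed

lemma field_power_mult_card_minus_one_Suc:
  fixes x :: "'a::{field,finite}"
  shows "x ^ (k * (CARD('a) - 1) + 1) = x"
proof (cases "x = 0")
  case False
  have "x ^ (k * (CARD('a) - 1) + 1) = (x ^ (CARD('a) - 1)) ^ k * x"
    by (simp only: power_add power_one_right mult.commute[of k] power_mult)
  with field_power_card_minus_one[OF False] show ?thesis
    by simp
qed simp

lemma field_power_card:
  fixes x :: "'a::{field,finite}"
  shows "x ^ CARD('a) = x"
  using field_power_mult_card_minus_one_Suc[of x 1] by simp

lemma bij_power_field:
  assumes "d > 0" and "coprime d (CARD('a::{field,finite}) - 1)"
  shows "bij (\<lambda>x::'a. x ^ d)"
proof -
  obtain s t where "d * s = (CARD('a) - 1) * t + gcd d (CARD('a) - 1)"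
    using bezout_nat[of d "CARD('a) - 1"] assms(1) by auto
  with assms(2) have "(x ^ d) ^ s = x" for x :: 'a
    using field_power_mult_card_minus_one_Suc[of x t]
    by (simp add: power_mult[symmetric] mult.commute)
  then have "inj (\<lambda>x::'a. x ^ d)"
    by (metis injI)
  then show ?thesis
    by (simp add: bij_def finite_UNIV_inj_surj)
qed

lemma add_self_CHAR_2:
  assumes "CHAR('a::ring_1) = 2"
  shows "(x::'a) + x = 0"
  using uminus_CHAR_2[OF assms, of x] by (simp add: add_eq_0_iff2)

lemma power2_add_CHAR_2:
  fixes x y :: "'a::comm_ring_1"
  assumes "CHAR('a) = 2"
  shows "(x + y) ^ 2 = x ^ 2 + y ^ 2"
proof -
  have "(x + y) ^ 2 = x ^ 2 + y ^ 2 + (x * y + x * y)"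
    by (simp add: power2_eq_square algebra_simps)
  then show ?thesis
    by (simp add: add_self_CHAR_2[OF assms])
qed

lemma power_two_power_add_CHAR_2:
  fixes x y :: "'a::comm_ring_1"
  assumes "CHAR('a) = 2"
  shows "(x + y) ^ (2 ^ k) = x ^ (2 ^ k) + y ^ (2 ^ k)"
proof (induction k)
  case (Suc k)
  then show ?case
    by (simp only: power_Suc2 power_mult power2_add_CHAR_2[OF assms])
qed simp

lemma power_two_power_sum_CHAR_2:
  fixes f :: "'b \<Rightarrow> 'a::comm_ring_1"
  assumes "CHAR('a) = 2"
  shows "(\<Sum>i\<in>I. f i) ^ (2 ^ k) = (\<Sum>i\<in>I. f i ^ (2 ^ k))"
  by (induction I rule: infinite_finite_induct)
     (simp_all add: power_two_power_add_CHAR_2[OF assms] power_0_left)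

text \<open>The involution swaps \<open>x\<close> and \<open>y\<close> off the diagonal and adds \<open>1\<close> to both on it,
  where necessarily \<open>z = 0\<close>.\<close>

lemma even_card_zero_sum_triples_CHAR_2:
  fixes f :: "'a::{comm_ring_1,finite} \<Rightarrow> 'a"
  assumes "CHAR('a) = 2" and "f 0 = 0"
  shows "even (card {(x, y, z). x + y + z = 0 \<and> f x + f y + f z = 0})"
proof -
  have "(2::'a) = 0"
    using of_nat_CHAR[where 'a = 'a] assms(1) by simp
  define h :: "'a \<times> 'a \<times> 'a \<Rightarrow> 'a \<times> 'a \<times> 'a"
    where "h = (\<lambda>(x, y, z). if x = y then (x + 1, y + 1, z) else (y, x, z))"
  show ?thesis
    by (rule even_card_involution[where h = h])
       (use assms(2) \<open>(2::'a) = 0\<close> in \<open>auto simp: h_def add_ac split: if_splits\<close>)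
qed

section \<open>The absolute trace and its additive character\<close>

definition trace_char :: "nat \<Rightarrow> 'a::field \<Rightarrow> int" where
  "trace_char m x = (if abs_trace m x = 0 then 1 else -1)"

definition walsh :: "nat \<Rightarrow> ('a::{field,finite} \<Rightarrow> 'a) \<Rightarrow> 'a \<Rightarrow> int" where
  "walsh m f a = (\<Sum>x\<in>UNIV. trace_char m (f x + a * x))"

lemma walsh_power_eq_walsh: "walsh_power m d = walsh m (\<lambda>x. x ^ d)"
  by (simp add: fun_eq_iff walsh_power_def walsh_def trace_char_def)

context
  fixes m :: nat
  assumes card_eq: "CARD('a::{field,finite}) = 2 ^ m"
begin

lemma card_exponent_pos: "m > 0"
proof (rule ccontr)
  assume "\<not> m > 0"
  then have "CARD('a) = 1"
    using card_eq by simp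
  moreover have "card {0::'a, 1} \<le> CARD('a)"
    by (rule card_mono) auto
  ultimately show False
    by simp
qed

lemma CHAR_eq_2: "CHAR('a) = 2"
proof -
  have "prime CHAR('a)"
    by (simp add: finite_imp_CHAR_pos prime_CHAR_semidom)
  moreover have "CHAR('a) dvd 2 ^ m"
    using CHAR_dvd_CARD[where 'a = 'a] card_eq by simp
  ultimately show ?thesis
    by (metis prime_dvd_power two_is_prime_nat primes_dvd_imp_eq)
qed

lemma abs_trace_add: "abs_trace m ((x::'a) + y) = abs_trace m x + abs_trace m y"
  by (simp add: abs_trace_def power_two_power_add_CHAR_2[OF CHAR_eq_2] sum.distrib)

lemma abs_trace_zero: "abs_trace m (0::'a) = 0"
  by (simp add: abs_trace_def power_0_left)

lemma abs_trace_square: "abs_trace m (x::'a) ^ 2 = abs_trace m x"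
proof -
  have "abs_trace m x ^ 2 = (\<Sum>i<m. (x ^ 2 ^ i) ^ 2)"
    using power_two_power_sum_CHAR_2[OF CHAR_eq_2, of _ _ 1] by (simp add: abs_trace_def)
  moreover have "(\<Sum>i<m. (x ^ 2 ^ i) ^ 2) = (\<Sum>i<m. x ^ 2 ^ Suc i)"
    by (simp only: power_Suc2 power_mult)
  moreover have "x + (\<Sum>i<m. x ^ 2 ^ Suc i) = (\<Sum>i<m. x ^ 2 ^ i) + x ^ 2 ^ m"
    using sum.lessThan_Suc_shift[of "\<lambda>i. x ^ 2 ^ i" m] by simp
  moreover have "x ^ 2 ^ m = x"
    using field_power_card[of x] card_eq by simp
  ultimately show ?thesis
    by (simp add: abs_trace_def)
qed

lemma abs_trace_eq_0_or_1: "abs_trace m (x::'a) = 0 \<or> abs_trace m x = 1"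
proof -
  have "abs_trace m x * (abs_trace m x - 1) = 0"
    using abs_trace_square[of x] by (simp add: power2_eq_square algebra_simps)
  then show ?thesis
    by simp
qed

lemma abs_trace_not_identically_zero: "\<exists>x::'a. abs_trace m x \<noteq> 0"
proof (rule ccontr)
  assume "\<nexists>x::'a. abs_trace m x \<noteq> 0"
  define p :: "'a poly" where "p = (\<Sum>i<m. Polynomial.monom 1 (2 ^ i))"
  have "poly p x = abs_trace m x" for x
    by (simp add: p_def abs_trace_def poly_sum poly_monom)
  with \<open>\<nexists>x. abs_trace m x \<noteq> 0\<close> have roots: "{x. poly p x = 0} = UNIV"
    by auto
  have "Polynomial.coeff p 1 = (\<Sum>i<m. if i = 0 then 1 else 0)"
    unfolding p_def coeff_sum by (intro sum.cong) (simp_all add: coeff_monom)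
  with card_exponent_pos have "p \<noteq> 0"
    by auto
  moreover have "degree p < 2 ^ m"
    unfolding p_def by (rule degree_sum_less) (simp_all add: degree_monom_eq)
  ultimately show False
    using card_poly_roots_bound[of p] roots card_eq by simp
qed

lemma trace_char_add: "trace_char m ((x::'a) + y) = trace_char m x * trace_char m y"
  using abs_trace_eq_0_or_1[of x] abs_trace_eq_0_or_1[of y]
    abs_trace_add[of x y] add_self_CHAR_2[OF CHAR_eq_2, of 1]
  by (auto simp: trace_char_def)

lemma trace_char_zero [simp]: "trace_char m (0::'a) = 1"
  by (simp add: trace_char_def abs_trace_zero)

lemma trace_char_mult_self: "trace_char m (x::'a) * trace_char m x = 1"
  by (simp add: trace_char_def)

lemma sum_trace_char: "(\<Sum>x\<in>UNIV. trace_char m (x::'a)) = 0"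
proof -
  obtain b :: 'a where "abs_trace m b \<noteq> 0"
    using abs_trace_not_identically_zero by blast
  then have "trace_char m b = -1"
    by (simp add: trace_char_def)
  have "(\<Sum>x\<in>UNIV. trace_char m (x::'a)) = (\<Sum>x\<in>UNIV. trace_char m (x + b))"
    by (rule sum.reindex_bij_witness[of _ "\<lambda>x. x + b" "\<lambda>x. x + b"])
       (auto simp: add.assoc add_self_CHAR_2[OF CHAR_eq_2])
  also have "\<dots> = - (\<Sum>x\<in>UNIV. trace_char m (x::'a))"
    by (simp add: trace_char_add \<open>trace_char m b = -1\<close> sum_negf)
  finally show ?thesis
    by simp
qed

lemma sum_trace_char_mult: "(\<Sum>b\<in>UNIV. trace_char m (b * (h::'a))) = (if h = 0 then 2 ^ m else 0)"
proof (cases "h = 0")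
  case False
  have "(\<Sum>b\<in>UNIV. trace_char m (b * h)) = (\<Sum>x\<in>UNIV. trace_char m (x::'a))"
    by (rule sum.reindex_bij_witness[of _ "\<lambda>x. x / h" "\<lambda>b. b * h"]) (use False in auto)
  with False show ?thesis
    by (simp add: sum_trace_char)
qed (simp add: card_eq)

lemma walsh_const_zero: "walsh m (\<lambda>_. 0) (a::'a) = (if a = 0 then 2 ^ m else 0)"
  using sum_trace_char_mult[of a] by (simp add: walsh_def mult.commute)

lemma sum_walsh: "(\<Sum>a\<in>UNIV. walsh m f (a::'a)) = 2 ^ m * trace_char m (f 0)"
proof -
  have "(\<Sum>a\<in>UNIV. walsh m f a) = (\<Sum>a\<in>UNIV. \<Sum>x\<in>UNIV. trace_char m (f x) * trace_char m (a * x))"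
    by (simp add: walsh_def trace_char_add)
  also have "\<dots> = (\<Sum>x\<in>UNIV. trace_char m (f x) * (\<Sum>a\<in>UNIV. trace_char m (a * x)))"
    by (subst sum.swap) (simp add: sum_distrib_left)
  also have "\<dots> = (\<Sum>x\<in>UNIV. if x = 0 then 2 ^ m * trace_char m (f x) else 0)"
    by (intro sum.cong) (simp_all add: sum_trace_char_mult)
  also have "\<dots> = 2 ^ m * trace_char m (f 0)"
    by simp
  finally show ?thesis .
qed

lemma sum_walsh_squared: "(\<Sum>a\<in>UNIV. walsh m f (a::'a) ^ 2) = 2 ^ (2 * m)"
proof -
  define g where "g x y = trace_char m (f x) * trace_char m (f y)" for x y
  have "walsh m f a ^ 2 = (\<Sum>x\<in>UNIV. \<Sum>y\<in>UNIV. g x y * trace_char m (a * (x + y)))" for a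
    by (simp add: g_def walsh_def power2_eq_square sum_product trace_char_add distrib_left mult_ac)
  then have "(\<Sum>a\<in>UNIV. walsh m f a ^ 2) =
      (\<Sum>a\<in>UNIV. \<Sum>x\<in>UNIV. \<Sum>y\<in>UNIV. g x y * trace_char m (a * (x + y)))"
    by simp
  also have "\<dots> = (\<Sum>x\<in>UNIV. \<Sum>y\<in>UNIV. \<Sum>a\<in>UNIV. g x y * trace_char m (a * (x + y)))"
    by (subst sum.swap) (rule sum.cong[OF refl], rule sum.swap)
  also have "\<dots> = (\<Sum>x\<in>UNIV. \<Sum>y\<in>UNIV. if y = (x::'a) then 2 ^ m else 0)"
    by (intro sum.cong refl) (auto simp: sum_distrib_left[symmetric] sum_trace_char_mult g_def
        trace_char_mult_self add_eq_0_iff2 uminus_CHAR_2[OF CHAR_eq_2])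
  also have "\<dots> = 2 ^ (2 * m)"
    by (simp add: card_eq power_add[symmetric] mult_2)
  finally show ?thesis .
qed

lemma sum_walsh_cubed_over_scalings:
  fixes f :: "'a \<Rightarrow> 'a"
  shows "(\<Sum>b\<in>UNIV. \<Sum>a\<in>UNIV. walsh m (\<lambda>x. b * f x) a ^ 3) =
    2 ^ (2 * m) * int (card {(x, y, z). x + y + z = 0 \<and> f x + f y + f z = 0})"
proof -
  define T where "T = {(x, y, z). x + y + z = 0 \<and> f x + f y + f z = (0::'a)}"
  define F where "F = (\<lambda>(x, y, z). f x + f y + f z)"
  define S where "S = (\<lambda>(x, y, z). x + y + (z::'a))"
  have "walsh m (\<lambda>x. b * f x) a ^ 3 = (\<Sum>p\<in>UNIV. trace_char m (b * F p) * trace_char m (a * S p))"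
    for a b
    unfolding walsh_def sum_power3_eq_sum_triples UNIV_Times_UNIV[symmetric]
    by (intro sum.cong) (auto simp: F_def S_def trace_char_add[symmetric] algebra_simps)
  then have "(\<Sum>b\<in>UNIV. \<Sum>a\<in>UNIV. walsh m (\<lambda>x. b * f x) a ^ 3) =
      (\<Sum>b\<in>UNIV. \<Sum>a\<in>UNIV. \<Sum>p\<in>UNIV. trace_char m (b * F p) * trace_char m (a * S p))"
    by simp
  also have "\<dots> = (\<Sum>p\<in>UNIV. \<Sum>b\<in>UNIV. \<Sum>a\<in>UNIV. trace_char m (b * F p) * trace_char m (a * S p))"
    by (subst sum.swap) (subst (2) sum.swap, rule refl)
  also have "\<dots> = (\<Sum>p\<in>UNIV. if p \<in> T then 2 ^ (2 * m) else 0)"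
    by (intro sum.cong refl)
       (simp add: sum_product[symmetric] sum_trace_char_mult T_def F_def S_def power_add[symmetric]
          mult_2 split: prod.splits)
  also have "\<dots> = 2 ^ (2 * m) * int (card T)"
    by (simp add: sum.If_cases)
  finally show ?thesis
    by (simp add: T_def)
qed

end

section \<open>Moments of the Walsh transform of a power map\<close>

context
  fixes m d :: nat
  assumes card_eq: "CARD('a::{field,finite}) = 2 ^ m"
    and d_pos: "d > 0"
    and coprime_d: "coprime d (2 ^ m - 1)"
begin

lemma bij_power: "bij (\<lambda>x::'a. x ^ d)"
  using bij_power_field[OF d_pos, where 'a = 'a] coprime_d card_eq by simp

lemma walsh_power_zero: "walsh_power m d (0::'a) = 0"
proof -
  have "walsh_power m d (0::'a) = (\<Sum>x\<in>UNIV. trace_char m ((x::'a) ^ d))"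
    by (simp add: walsh_power_eq_walsh walsh_def)
  also have "\<dots> = (\<Sum>x\<in>UNIV. trace_char m (x::'a))"
    using bij_power by (rule sum.reindex_bij_betw)
  finally show ?thesis
    by (simp add: sum_trace_char[OF card_eq])
qed

lemma sum_walsh_power: "(\<Sum>a\<in>UNIV. walsh_power m d (a::'a)) = 2 ^ m"
  using d_pos
  by (simp add: walsh_power_eq_walsh sum_walsh[OF card_eq] power_0_left trace_char_zero[OF card_eq])

lemma sum_walsh_power_squared: "(\<Sum>a\<in>UNIV. walsh_power m d (a::'a) ^ 2) = 2 ^ (2 * m)"
  by (simp add: walsh_power_eq_walsh sum_walsh_squared[OF card_eq])

lemma sum_walsh_scaled_power_cubed:
  assumes "(b::'a) \<noteq> 0"
  shows "(\<Sum>a\<in>UNIV. walsh m (\<lambda>x. b * x ^ d) a ^ 3) = (\<Sum>a\<in>UNIV. walsh_power m d (a::'a) ^ 3)"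
proof -
  obtain c :: 'a where "c ^ d = b"
    using bij_power by (metis bij_pointE)
  with assms d_pos have "c \<noteq> 0"
    by auto
  have "walsh m (\<lambda>x. b * x ^ d) a = walsh_power m d (a / c)" for a
  proof -
    have "walsh m (\<lambda>x. b * x ^ d) a = (\<Sum>x\<in>UNIV. trace_char m ((c * x) ^ d + a / c * (c * x)))"
      using \<open>c ^ d = b\<close> \<open>c \<noteq> 0\<close> by (simp add: walsh_def power_mult_distrib)
    also have "\<dots> = walsh_power m d (a / c)"
      unfolding walsh_power_eq_walsh walsh_def
      by (rule sum.reindex_bij_witness[of _ "\<lambda>y. y / c" "\<lambda>x. c * x"]) (use \<open>c \<noteq> 0\<close> in auto)
    finally show ?thesis .
  qed
  moreover have "(\<Sum>a\<in>UNIV. walsh_power m d (a / c) ^ 3) = (\<Sum>a\<in>UNIV. walsh_power m d (a::'a) ^ 3)"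
    by (rule sum.reindex_bij_witness[of _ "\<lambda>a. a * c" "\<lambda>a. a / c"]) (use \<open>c \<noteq> 0\<close> in auto)
  ultimately show ?thesis
    by simp
qed

lemma sum_walsh_power_cubed_dvd: "2 ^ (2 * m + 1) dvd (\<Sum>a\<in>UNIV. walsh_power m d (a::'a) ^ 3)"
proof -
  define S where "S = (\<Sum>a\<in>UNIV. walsh_power m d (a::'a) ^ 3)"
  define N where "N = card {(x, y, z). x + y + z = 0 \<and> x ^ d + y ^ d + z ^ d = (0::'a)}"
  define V where "V b = (\<Sum>a\<in>UNIV. walsh m (\<lambda>x. b * x ^ d) (a::'a) ^ 3)" for b
  have "V 0 = (\<Sum>a\<in>UNIV. if a = (0::'a) then 2 ^ (3 * m) else 0)"
    unfolding V_def by (intro sum.cong) (simp_all add: walsh_const_zero[OF card_eq] power_mult[symmetric])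
  then have "V 0 = 2 ^ (3 * m)"
    by simp
  moreover have "(\<Sum>b\<in>UNIV - {0}. V b) = (2 ^ m - 1) * S"
    using card_eq by (simp add: V_def S_def sum_walsh_scaled_power_cubed card_Diff_singleton of_nat_diff)
  moreover have "(\<Sum>b\<in>UNIV. V b) = V 0 + (\<Sum>b\<in>UNIV - {0}. V b)"
    by (simp add: sum.remove)
  ultimately have "2 ^ (3 * m) + (2 ^ m - 1) * S = 2 ^ (2 * m) * int N"
    using sum_walsh_cubed_over_scalings[OF card_eq, of "\<lambda>x. x ^ d"] by (simp add: V_def N_def)
  moreover obtain t where "N = 2 * t"
    using even_card_zero_sum_triples_CHAR_2[OF CHAR_eq_2[OF card_eq], of "\<lambda>x. x ^ d"] d_pos
    by (auto simp: N_def power_0_left)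
  moreover have "(2::int) ^ (3 * m) = 2 ^ (2 * m) * 2 ^ m"
    by (simp add: power_add[symmetric])
  moreover obtain k :: nat where "m = Suc k"
    using card_exponent_pos[OF card_eq] gr0_implies_Suc by blast
  ultimately have "(2 ^ m - 1) * S = 2 ^ (2 * m + 1) * (int t - 2 ^ k)"
    by (simp only: power_add power_Suc) (simp add: algebra_simps)
  then have "2 ^ (2 * m + 1) dvd (2 ^ m - 1) * S"
    by simp
  moreover have "coprime (2 ^ (2 * m + 1)) (2 ^ m - 1 :: int)"
    using card_exponent_pos[OF card_eq] by simp
  ultimately show ?thesis
    by (simp add: S_def coprime_dvd_mult_right_iff)
qed

end

section \<open>Two-adic valuations\<close>

lemma multiplicity_two_less:
  fixes x :: int
  assumes "x \<noteq> 0" "\<bar>x\<bar> < 2 ^ m"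
  shows "multiplicity 2 x < m"
proof -
  have "2 ^ multiplicity 2 x \<le> \<bar>x\<bar>"
    using dvd_imp_le_int[OF assms(1) multiplicity_dvd[of 2 x]] by simp
  with assms(2) have "(2::int) ^ multiplicity 2 x < 2 ^ m"
    by linarith
  then show ?thesis
    by (simp add: power_strict_increasing_iff)
qed

lemma power_two_dvd_iff_multiplicity:
  fixes x :: int
  assumes "x \<noteq> 0"
  shows "2 ^ k dvd x \<longleftrightarrow> k \<le> multiplicity 2 x"
  using assms by (simp add: power_dvd_iff_le_multiplicity)

lemma multiplicity_two_mult:
  fixes x y :: int
  assumes "x \<noteq> 0" "y \<noteq> 0"
  shows "multiplicity 2 (x * y) = multiplicity 2 x + multiplicity 2 y"
  using assms by (simp add: prime_elem_multiplicity_mult_distrib)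

lemma power_two_dvd_scaled:
  fixes x :: int
  assumes "e \<le> k + multiplicity 2 x"
  shows "2 ^ e dvd 2 ^ k * x"
proof -
  have "2 ^ (k + multiplicity 2 x) dvd 2 ^ k * x"
    by (simp add: power_add multiplicity_dvd)
  with assms show ?thesis
    using le_imp_power_dvd dvd_trans by blast
qed

lemma power_two_dvd_triple_product:
  fixes A B C :: int
  assumes nonzero: "A \<noteq> 0" "B \<noteq> 0" "C \<noteq> 0"
    and small: "\<bar>A\<bar> < 2 ^ m" "\<bar>B\<bar> < 2 ^ m" "\<bar>C\<bar> < 2 ^ m"
    and congruence: "2 ^ (2 * m + 1) dvd
      A * B * C * (2 ^ m - 1) - 2 ^ m * (A * B + B * C + C * A) + 2 ^ (2 * m) * (A + B + C)"
  shows "2 ^ (2 * m + 1) dvd A * B * C"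
proof (rule ccontr)
  let ?v = "multiplicity (2::int)"
  define e where "e = ?v A + ?v B + ?v C"
  have v_less: "?v A < m" "?v B < m" "?v C < m"
    using multiplicity_two_less nonzero small by blast+
  have v_prod: "?v (A * B * C) = e"
    using nonzero by (simp add: e_def multiplicity_two_mult)
  assume "\<not> 2 ^ (2 * m + 1) dvd A * B * C"
  moreover have "A * B * C \<noteq> 0"
    using nonzero by simp
  ultimately have "\<not> 2 * m + 1 \<le> e"
    using power_two_dvd_iff_multiplicity v_prod by blast
  then have "2 ^ (e + 1) dvd (2 ^ (2 * m + 1) :: int)"
    by (intro le_imp_power_dvd) simp
  then have "2 ^ (e + 1) dvd
      A * B * C * (2 ^ m - 1) - 2 ^ m * (A * B + B * C + C * A) + 2 ^ (2 * m) * (A + B + C)"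
    using congruence by (rule dvd_trans)
  moreover have "2 ^ (e + 1) dvd 2 ^ m * (A * B + B * C + C * A) - 2 ^ (2 * m) * (A + B + C)"
    unfolding distrib_left using nonzero v_less
    by (intro dvd_add dvd_diff power_two_dvd_scaled) (simp_all add: e_def multiplicity_two_mult)
  ultimately have "2 ^ (e + 1) dvd
      (A * B * C * (2 ^ m - 1) - 2 ^ m * (A * B + B * C + C * A) + 2 ^ (2 * m) * (A + B + C))
      + (2 ^ m * (A * B + B * C + C * A) - 2 ^ (2 * m) * (A + B + C))"
    by (rule dvd_add)
  then have "2 ^ (e + 1) dvd A * B * C * (2 ^ m - 1)"
    by simp
  moreover have "odd (2 ^ m - 1 :: int)"
    using v_less by simp
  then have "A * B * C * (2 ^ m - 1) \<noteq> 0" "?v (A * B * C * (2 ^ m - 1)) = e"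
    using nonzero by (auto simp: multiplicity_two_mult v_prod not_dvd_imp_multiplicity_0)
  ultimately show False
    using power_two_dvd_iff_multiplicity[of "A * B * C * (2 ^ m - 1)" "e + 1"] by simp
qed

lemma power_two_dvd_cancel_small:
  fixes X C :: int
  assumes "2 ^ (k + m) dvd X * C" "C \<noteq> 0" "\<bar>C\<bar> < 2 ^ m"
  shows "2 ^ (k + 1) dvd X"
proof (cases "X = 0")
  case False
  with assms have "k + m \<le> multiplicity 2 X + multiplicity 2 C"
    by (simp add: power_two_dvd_iff_multiplicity multiplicity_two_mult)
  moreover have "multiplicity 2 C < m"
    using assms(2,3) by (rule multiplicity_two_less)
  ultimately show ?thesis
    using power_two_dvd_iff_multiplicity[OF False, of "k + 1"] by simp
qed simp

section \<open>Three-valued Walsh spectra\<close>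

lemma sum_cube_of_three_valued:
  fixes W :: "'b \<Rightarrow> 'c::comm_ring_1"
  assumes "\<And>a. a \<in> U \<Longrightarrow> W a \<in> {A, B, C}"
  shows "(\<Sum>a\<in>U. W a ^ 3) = (A + B + C) * (\<Sum>a\<in>U. W a ^ 2)
    - (A * B + B * C + C * A) * (\<Sum>a\<in>U. W a) + A * B * C * of_nat (card U)"
proof -
  have "W a ^ 3 = (A + B + C) * W a ^ 2 - (A * B + B * C + C * A) * W a + A * B * C" if "a \<in> U" for a
  proof -
    have "(W a - A) * (W a - B) * (W a - C) = 0"
      using assms[OF that] by auto
    then show ?thesis
      by (simp add: algebra_simps power2_eq_square power3_eq_cube)
  qed
  then show ?thesis
    by (simp add: sum.distrib sum_subtractf sum_distrib_left)
qed

lemma abs_less_of_sum_squares_le: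
  fixes W :: "'b \<Rightarrow> 'c::linordered_idom"
  assumes "finite U" "a \<in> U" "b \<in> U" "W b \<noteq> W a" "W b \<noteq> 0"
    and "(\<Sum>c\<in>U. W c ^ 2) \<le> M ^ 2" "0 \<le> M"
  shows "\<bar>W a\<bar> < M"
proof -
  from assms(4) have "a \<noteq> b"
    by auto
  then have "W a ^ 2 + W b ^ 2 = (\<Sum>c\<in>{a, b}. W c ^ 2)"
    by simp
  also have "\<dots> \<le> (\<Sum>c\<in>U. W c ^ 2)"
    using assms(1-3) by (intro sum_mono2) auto
  finally have "W a ^ 2 + W b ^ 2 \<le> M ^ 2"
    using assms(6) by simp
  moreover have "W b ^ 2 > 0"
    using assms(5) by simp
  ultimately have "W a ^ 2 < M ^ 2"
    by linarith
  then show ?thesis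
    using assms(7) power2_less_imp_less[of "\<bar>W a\<bar>" M] by simp
qed

lemma power_two_dvd_of_three_valued_moments:
  fixes W :: "'b \<Rightarrow> int"
  assumes "finite U" "card U = 2 ^ m - 1" and W_image: "W ` U = {A, B, C}"
    and dist: "A \<noteq> B" "A \<noteq> C" "B \<noteq> C" and nz: "A \<noteq> 0" "B \<noteq> 0" "C \<noteq> 0"
    and sum1: "(\<Sum>a\<in>U. W a) = 2 ^ m"
    and sum2: "(\<Sum>a\<in>U. W a ^ 2) = (2 ^ m) ^ 2"
    and sum3: "2 ^ (2 * m + 1) dvd (\<Sum>a\<in>U. W a ^ 3)"
  shows "2 ^ (m + 1) dvd A * B"
proof -
  have small: "\<bar>v\<bar> < 2 ^ m" if "v \<in> {A, B, C}" for v
  proof -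
    obtain w where w: "w \<in> {A, B, C}" "w \<noteq> v"
      using dist by blast
    from that w(1) have "v \<in> W ` U" "w \<in> W ` U"
      by (simp_all add: W_image)
    then obtain a b where "a \<in> U" "W a = v" "b \<in> U" "W b = w"
      by blast
    moreover have "w \<noteq> 0"
      using w(1) nz by blast
    ultimately show ?thesis
      using abs_less_of_sum_squares_le[of U a b W "2 ^ m"] assms(1) sum2 w(2) by simp
  qed
  have "W a \<in> {A, B, C}" if "a \<in> U" for a
    using that W_image by blast
  then have "(\<Sum>a\<in>U. W a ^ 3) = (A + B + C) * (2 ^ m) ^ 2 - (A * B + B * C + C * A) * 2 ^ m
      + A * B * C * (2 ^ m - 1)"
    using sum_cube_of_three_valued[of U W A B C] assms(2) sum1 sum2 by (simp add: of_nat_diff)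
  with sum3 have "2 ^ (2 * m + 1) dvd
      A * B * C * (2 ^ m - 1) - 2 ^ m * (A * B + B * C + C * A) + 2 ^ (2 * m) * (A + B + C)"
    by (simp add: power_mult[symmetric] mult.commute algebra_simps)
  moreover have abs_less: "\<bar>A\<bar> < 2 ^ m" "\<bar>B\<bar> < 2 ^ m" "\<bar>C\<bar> < 2 ^ m"
    using small by simp_all
  ultimately have "2 ^ (2 * m + 1) dvd A * B * C"
    using power_two_dvd_triple_product[OF nz] by blast
  then have "2 ^ (m + m) dvd A * B * C"
    by (rule dvd_trans[rotated]) (simp add: le_imp_power_dvd)
  then show ?thesis
    using nz(3) abs_less(3) by (rule power_two_dvd_cancel_small)
qed

theorem lemma9:
  fixes m d :: nat and A B C :: int
  assumes card: "card (UNIV :: 'a::{field,finite} set) = 2 ^ m"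
    and m: "m \<ge> 1"
    and d: "d > 0"
    and cop: "coprime d (2 ^ m - 1)"
    and three: "(walsh_power m d :: 'a \<Rightarrow> int) ` (UNIV - {0}) = {A, B, C}"
    and dist: "A \<noteq> B" "A \<noteq> C" "B \<noteq> C"
    and nz: "A \<noteq> 0" "B \<noteq> 0" "C \<noteq> 0"
  shows "2 ^ (m + 1) dvd A * B"
proof -
  define W where "W = (walsh_power m d :: 'a \<Rightarrow> int)"
  define U where "U = (UNIV - {0} :: 'a set)"
  have sum_U: "(\<Sum>a\<in>U. W a ^ k) = (\<Sum>a\<in>UNIV. W a ^ k)" if "k > 0" for k
    using that walsh_power_zero[OF card d cop] by (simp add: U_def W_def sum_diff1)
  show ?thesis
  proof (rule power_two_dvd_of_three_valued_moments[of U _ W A B C])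
    show "card U = 2 ^ m - 1"
      using card by (simp add: U_def card_Diff_singleton)
    show "(\<Sum>a\<in>U. W a) = 2 ^ m"
      using sum_U[of 1] sum_walsh_power[OF card d cop] by (simp add: W_def)
    show "(\<Sum>a\<in>U. W a ^ 2) = (2 ^ m) ^ 2"
      using sum_U[of 2] sum_walsh_power_squared[OF card d cop]
      by (simp add: W_def power_mult[symmetric] mult.commute)
    show "2 ^ (2 * m + 1) dvd (\<Sum>a\<in>U. W a ^ 3)"
      using sum_U[of 3] sum_walsh_power_cubed_dvd[OF card d cop] by (simp add: W_def)
  qed (use three dist nz in \<open>simp_all add: U_def W_def\<close>)
qed

end
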